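(* Let $\tau=(s_1,a_1,s_2,a_2,\dots,s_T,a_T,s_{T+1})$ be a trajectory, and suppose that for each $t$ there is a real-valued reward variable $r_t$ and a binary optimality variable $\mathcal{O}_t\in\{0,1\}$, with joint density $$p(\tau,\mathcal{O}_{1:T},r_{1:T}) = p(s_1)\prod_{t=1}^{T} p(r_t\mid s_t,a_t)\,p(\mathcal{O}_t\mid r_t)\,p(s_{t+1}\mid s_t,a_t)\,p(a_t),$$ so that $p(\mathcal{O}_t\mid s_t,a_t)=\int p(\mathcal{O}_t\mid r_t)\,p(r_t\mid s_t,a_t)\,dr_t$ and $p(\tau)$ is obtained by marginalizing out all $\mathcal{O}_t$ and $r_t$. For each $t$, let $q(\cdot\mid r_t)$ be any probability distribution on $\{0,1\}$ (depending on the reward value $r_t$). Then $$\log p(\tau)\;\ge\;\log p(s_1)+\sum_{t=1}^{T}\Big[-D_{KL}\big(q(\mathcal{O}_t\mid r_t)\,\|\,p(\mathcal{O}_t\mid s_t,a_t)\big)+\log p(s_{t+1}\mid s_t,a_t)+\log p(a_t)\Big].$$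
   Context: $D_{KL}(q\|p)=\sum_{o\in\{0,1\}} q(o)\log\frac{q(o)}{p(o)}$ denotes the Kullback–Leibler divergence (the "reverse" KL, with the variational distribution $q$ in the first argument). The right-hand side is called the evidence lower bound (ELBO). *)

theory Defs
  imports "HOL-Probability.Probability"
begin

definition elog :: "real \<Rightarrow> ereal" where
  "elog x = (if x > 0 then ereal (ln x) else -\<infinity>)"

text \<open>Reverse KL divergence of distributions on {0,1} (False = 0, True = 1),
  with conventions 0 log(0/p) = 0 and q log(q/0) = +infinity for q > 0.\<close>
definition KL :: "(bool \<Rightarrow> real) \<Rightarrow> (bool \<Rightarrow> real) \<Rightarrow> ereal" where
  "KL q p = (if \<exists>b. q b > 0 \<and> p b \<le> 0 then \<infinity>
             else ereal (\<Sum>b\<in>UNIV. if q b = 0 then 0 else q b * ln (q b / p b)))"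

definition joint ::
  "('s \<Rightarrow> real) \<Rightarrow> ('s \<Rightarrow> 'a \<Rightarrow> 's \<Rightarrow> real) \<Rightarrow> ('a \<Rightarrow> real) \<Rightarrow>
   ('s \<Rightarrow> 'a \<Rightarrow> real \<Rightarrow> real) \<Rightarrow> (real \<Rightarrow> bool \<Rightarrow> real) \<Rightarrow> nat \<Rightarrow>
   (nat \<Rightarrow> 's) \<Rightarrow> (nat \<Rightarrow> 'a) \<Rightarrow> (nat \<Rightarrow> bool) \<Rightarrow> (nat \<Rightarrow> real) \<Rightarrow> real" where
  "joint p1 P pa pr pO T s a Ob r =
     p1 (s 1) * (\<Prod>t\<in>{1..T}. pr (s t) (a t) (r t) * pO (r t) (Ob t)
                              * P (s t) (a t) (s (Suc t)) * pa (a t))"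

definition traj_marginal ::
  "('s \<Rightarrow> real) \<Rightarrow> ('s \<Rightarrow> 'a \<Rightarrow> 's \<Rightarrow> real) \<Rightarrow> ('a \<Rightarrow> real) \<Rightarrow>
   ('s \<Rightarrow> 'a \<Rightarrow> real \<Rightarrow> real) \<Rightarrow> (real \<Rightarrow> bool \<Rightarrow> real) \<Rightarrow> nat \<Rightarrow>
   (nat \<Rightarrow> 's) \<Rightarrow> (nat \<Rightarrow> 'a) \<Rightarrow> real" where
  "traj_marginal p1 P pa pr pO T s a =
     (\<integral>r. (\<Sum>Ob\<in>{1..T} \<rightarrow>\<^sub>E (UNIV :: bool set). joint p1 P pa pr pO T s a Ob r)
        \<partial>(PiM {1..T} (\<lambda>_. lborel)))"

definition pO_sa ::
  "('s \<Rightarrow> 'a \<Rightarrow> real \<Rightarrow> real) \<Rightarrow> (real \<Rightarrow> bool \<Rightarrow> real) \<Rightarrow> 's \<Rightarrow> 'a \<Rightarrow> bool \<Rightarrow> real" where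
  "pO_sa pr pO st ac b = (\<integral>x. pO x b * pr st ac x \<partial>lborel)"

end

theory Submission
  imports Defs
begin

text \<open>Summing out the optimality variables and integrating out the rewards is exact in this
  model: each \<open>p(O\<^sub>t | r\<^sub>t)\<close> sums to one over \<open>O\<^sub>t\<close> and each \<open>p(r\<^sub>t | s\<^sub>t, a\<^sub>t)\<close> integrates to one,
  so \<open>p(\<tau>) = p(s\<^sub>1) \<Prod>\<^sub>t p(s\<^sub>t\<^sub>+\<^sub>1 | s\<^sub>t, a\<^sub>t) p(a\<^sub>t)\<close>. Taking logarithms, the bound reduces to
  Gibbs' inequality: every KL term is nonnegative because \<open>q ln (q / p) \<ge> q - p\<close>.\<close>

lemma elog_mult:
  assumes "x \<ge> 0" "y \<ge> 0"
  shows "elog (x * y) = elog x + elog y"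
  using assms by (auto simp: elog_def ln_mult mult_pos_pos zero_less_mult_iff)

lemma elog_prod:
  assumes "finite A" "\<And>t. t \<in> A \<Longrightarrow> f t \<ge> (0::real)"
  shows "elog (\<Prod>t\<in>A. f t) = (\<Sum>t\<in>A. elog (f t))"
  using assms
  by (induction A rule: finite_induct) (simp add: elog_def, simp add: elog_mult prod_nonneg)

lemma diff_le_mult_ln_div:
  fixes p q :: real
  assumes "q > 0" "p > 0"
  shows "q - p \<le> q * ln (q / p)"
proof -
  have "ln (p / q) \<le> p / q - 1"
    using assms by (intro ln_le_minus_one) simp
  moreover have "ln (q / p) = - ln (p / q)"
    using assms by (simp add: ln_div)
  ultimately have "q * (1 - p / q) \<le> q * ln (q / p)"
    using assms by (intro mult_left_mono) auto
  then show ?thesis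
    using assms by (simp add: algebra_simps)
qed

lemma KL_nonneg:
  assumes "\<And>b. q b \<ge> 0" "q False + q True = 1"
    and "\<And>b. p b \<ge> 0" "p False + p True = 1"
  shows "KL q p \<ge> 0"
proof (cases "\<exists>b. q b > 0 \<and> p b \<le> 0")
  case True
  then show ?thesis by (simp add: KL_def)
next
  case False
  have term_ge: "q b - p b \<le> (if q b = 0 then 0 else q b * ln (q b / p b))" for b
  proof (cases "q b = 0")
    case False
    with assms(1)[of b] have "q b > 0"
      by simp
    moreover from this \<open>\<nexists>b. q b > 0 \<and> p b \<le> 0\<close> have "p b > 0"
      by (meson not_le)
    ultimately show ?thesis
      by (simp add: diff_le_mult_ln_div)
  qed (simp add: assms(3))
  have "0 = (\<Sum>b\<in>UNIV. q b - p b)"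
    using assms by (simp add: UNIV_bool)
  also have "\<dots> \<le> (\<Sum>b\<in>UNIV. if q b = 0 then 0 else q b * ln (q b / p b))"
    by (intro sum_mono term_ge)
  finally show ?thesis
    using False by (simp add: KL_def)
qed

lemma ereal_neg_add_le:
  fixes k x :: ereal
  assumes "0 \<le> k"
  shows "- k + x \<le> x"
  using add_right_mono[of "- k" 0 x] assms by simp

lemma sum_joint_over_optimality:
  assumes "\<And>v. pO v False + pO v True = 1"
  shows "(\<Sum>Ob\<in>{1..T} \<rightarrow>\<^sub>E UNIV. joint p1 P pa pr pO T s a Ob r)
       = p1 (s 1) * (\<Prod>t\<in>{1..T}. pr (s t) (a t) (r t) * (P (s t) (a t) (s (Suc t)) * pa (a t)))"
proof -
  have "(\<Sum>Ob\<in>{1..T} \<rightarrow>\<^sub>E UNIV. joint p1 P pa pr pO T s a Ob r)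
      = p1 (s 1) * (\<Prod>t\<in>{1..T}. \<Sum>b\<in>UNIV.
          pr (s t) (a t) (r t) * pO (r t) b * P (s t) (a t) (s (Suc t)) * pa (a t))"
    unfolding joint_def by (simp add: sum_distrib_left prod_sum_PiE)
  also have "\<dots> = p1 (s 1) * (\<Prod>t\<in>{1..T}.
          pr (s t) (a t) (r t) * (pO (r t) False + pO (r t) True) * (P (s t) (a t) (s (Suc t)) * pa (a t)))"
    by (simp add: UNIV_bool algebra_simps)
  finally show ?thesis
    using assms by simp
qed

lemma traj_marginal_eq:
  assumes "\<And>v. pO v False + pO v True = 1"
    and "\<And>x u. integrable lborel (pr x u)"
    and "\<And>x u. (\<integral>v. pr x u v \<partial>lborel) = 1"
  shows "traj_marginal p1 P pa pr pO T s a
       = p1 (s 1) * (\<Prod>t\<in>{1..T}. P (s t) (a t) (s (Suc t)) * pa (a t))"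
proof -
  interpret product_sigma_finite "\<lambda>_. lborel" by standard
  define g where "g t v = pr (s t) (a t) v * (P (s t) (a t) (s (Suc t)) * pa (a t))" for t v
  have g_integrable: "integrable lborel (g t)" for t
    unfolding g_def using assms(2) by simp
  have "traj_marginal p1 P pa pr pO T s a
      = (\<integral>r. p1 (s 1) * (\<Prod>t\<in>{1..T}. g t (r t)) \<partial>(PiM {1..T} (\<lambda>_. lborel)))"
    unfolding traj_marginal_def g_def sum_joint_over_optimality[OF assms(1)] ..
  also have "\<dots> = p1 (s 1) * (\<Prod>t\<in>{1..T}. integral\<^sup>L lborel (g t))"
    by (simp add: product_integral_prod g_integrable)
  also have "\<dots> = p1 (s 1) * (\<Prod>t\<in>{1..T}. P (s t) (a t) (s (Suc t)) * pa (a t))"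
    unfolding g_def using assms(3) by simp
  finally show ?thesis .
qed

lemma integrable_mult_unit_interval:
  fixes f g :: "'x \<Rightarrow> real"
  assumes "integrable M f" "g \<in> borel_measurable M" "\<And>x. 0 \<le> g x" "\<And>x. g x \<le> 1"
  shows "integrable M (\<lambda>x. g x * f x)"
proof (rule Bochner_Integration.integrable_bound[OF assms(1)])
  show "(\<lambda>x. g x * f x) \<in> borel_measurable M"
    using assms(1,2) by measurable
  show "AE x in M. norm (g x * f x) \<le> norm (f x)"
    using assms(3,4) by (auto intro!: mult_left_le_one_le simp: abs_mult)
qed

lemma pO_sa_normalized:
  assumes "\<And>v. pO v False + pO v True = 1"
    and "\<And>b. integrable lborel (\<lambda>v. pO v b * pr x u v)"
    and "(\<integral>v. pr x u v \<partial>lborel) = 1"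
  shows "pO_sa pr pO x u False + pO_sa pr pO x u True = 1"
proof -
  have "pO_sa pr pO x u False + pO_sa pr pO x u True
      = (\<integral>v. (pO v False + pO v True) * pr x u v \<partial>lborel)"
    unfolding pO_sa_def using assms(2) by (simp add: distrib_right)
  then show ?thesis
    using assms(1,3) by simp
qed

theorem mainTheorem1:
  fixes p1 :: "'s \<Rightarrow> real" and P :: "'s \<Rightarrow> 'a \<Rightarrow> 's \<Rightarrow> real" and pa :: "'a \<Rightarrow> real"
    and pr :: "'s \<Rightarrow> 'a \<Rightarrow> real \<Rightarrow> real" and pO :: "real \<Rightarrow> bool \<Rightarrow> real"
    and T :: nat and s :: "nat \<Rightarrow> 's" and a :: "nat \<Rightarrow> 'a"
    and q :: "nat \<Rightarrow> real \<Rightarrow> bool \<Rightarrow> real" and r :: "nat \<Rightarrow> real"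
  assumes p1_nonneg: "\<And>x. p1 x \<ge> 0"
    and P_nonneg: "\<And>x u y. P x u y \<ge> 0"
    and pa_nonneg: "\<And>u. pa u \<ge> 0"
    and pr_meas: "\<And>x u. pr x u \<in> borel_measurable lborel"
    and pr_nonneg: "\<And>x u v. pr x u v \<ge> 0"
    and pr_integrable: "\<And>x u. integrable lborel (pr x u)"
    and pr_normalized: "\<And>x u. (\<integral>v. pr x u v \<partial>lborel) = 1"
    and pO_meas: "\<And>b. (\<lambda>v. pO v b) \<in> borel_measurable lborel"
    and pO_nonneg: "\<And>v b. pO v b \<ge> 0"
    and pO_normalized: "\<And>v. pO v False + pO v True = 1"
    and q_nonneg: "\<And>t v b. q t v b \<ge> 0"
    and q_normalized: "\<And>t v. q t v False + q t v True = 1"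
  shows "elog (traj_marginal p1 P pa pr pO T s a) \<ge>
           elog (p1 (s 1)) +
           (\<Sum>t\<in>{1..T}. - KL (q t (r t)) (pO_sa pr pO (s t) (a t))
                          + elog (P (s t) (a t) (s (Suc t))) + elog (pa (a t)))"
proof -
  have log_marginal: "elog (traj_marginal p1 P pa pr pO T s a) =
      elog (p1 (s 1)) + (\<Sum>t\<in>{1..T}. elog (P (s t) (a t) (s (Suc t))) + elog (pa (a t)))"
    using p1_nonneg P_nonneg pa_nonneg
    by (simp add: traj_marginal_eq pO_normalized pr_integrable pr_normalized
                  elog_mult elog_prod prod_nonneg)
  have pO_le_one: "pO v b \<le> 1" for v b
    using pO_nonneg[of v False] pO_nonneg[of v True] pO_normalized[of v] by (cases b) auto
  have pO_pr_integrable: "integrable lborel (\<lambda>v. pO v b * pr x u v)" for b x u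
    using pr_integrable pO_meas pO_nonneg pO_le_one by (rule integrable_mult_unit_interval)
  have KL_ge: "KL (q t (r t)) (pO_sa pr pO (s t) (a t)) \<ge> 0" for t
  proof (rule KL_nonneg)
    show "pO_sa pr pO (s t) (a t) False + pO_sa pr pO (s t) (a t) True = 1"
      by (rule pO_sa_normalized[OF pO_normalized pO_pr_integrable pr_normalized])
  qed (use q_nonneg q_normalized pO_nonneg pr_nonneg in \<open>auto simp: pO_sa_def\<close>)
  have "(\<Sum>t\<in>{1..T}. - KL (q t (r t)) (pO_sa pr pO (s t) (a t))
                      + elog (P (s t) (a t) (s (Suc t))) + elog (pa (a t)))
     \<le> (\<Sum>t\<in>{1..T}. elog (P (s t) (a t) (s (Suc t))) + elog (pa (a t)))"
    using KL_ge by (intro sum_mono add_right_mono ereal_neg_add_le)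
  then show ?thesis
    unfolding log_marginal by (rule add_left_mono)
qed

end
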